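(* Let $\Omega\subset\mathbb{R}^N$ be a bounded open set. Let $u:\mathbb{R}^N\to\mathbb{R}$ be a bounded measurable function with $\int_{(0,1)}[u]_s^2\,d\mu(s)<\infty$, such that $\int_{(0,1)}\mathscr N_su(x)\,d\mu(s)=0$ for every $x\in\mathbb{R}^N\setminus\overline\Omega$. Then $$\lim_{|x|\to+\infty}u(x)=\frac1{|\Omega|}\int_\Omega u(x)\,dx.$$
   Context: $\mu$ is a nonnegative, nontrivial finite Borel measure on $(0,1)$. For $s\in(0,1)$, $c_{N,s}:=-\frac{2^{2s-1}\Gamma(\frac{N+2s}{2})}{\pi^{N/2}\Gamma(-s)}>0$. For $x\in\mathbb{R}^N\setminus\overline\Omega$, $\mathscr N_su(x):=c_{N,s}\int_\Omega\frac{u(x)-u(y)}{|x-y|^{N+2s}}dy$. $\mathcal Q:=\mathbb{R}^{2N}\setminus(\mathbb{R}^N\setminus\Omega)^2$ and $[u]_s^2:=c_{N,s}\iint_{\mathcal Q}\frac{|u(x)-u(y)|^2}{|x-y|^{N+2s}}dxdy$. *)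

theory Defs
  imports "HOL-Analysis.Analysis"
begin

definition cNs :: "nat \<Rightarrow> real \<Rightarrow> real" where
  "cNs n s = - (2 powr (2 * s - 1) * Gamma ((real n + 2 * s) / 2))
              / (pi powr (real n / 2) * Gamma (- s))"

definition neumann_s :: "'a::euclidean_space set \<Rightarrow> ('a \<Rightarrow> real) \<Rightarrow> real \<Rightarrow> 'a \<Rightarrow> real" where
  "neumann_s \<Omega> u s x = cNs DIM('a) s *
     (\<integral>y\<in>\<Omega>. (u x - u y) / norm (x - y) powr (real DIM('a) + 2 * s) \<partial>lebesgue)"

definition QQ :: "'a::euclidean_space set \<Rightarrow> ('a \<times> 'a) set" where
  "QQ \<Omega> = UNIV - (UNIV - \<Omega>) \<times> (UNIV - \<Omega>)"

definition gagliardo_sq :: "'a::euclidean_space set \<Rightarrow> ('a \<Rightarrow> real) \<Rightarrow> real \<Rightarrow> ennreal" where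
  "gagliardo_sq \<Omega> u s = (\<integral>\<^sup>+ p. indicator (QQ \<Omega>) p *
      ennreal (cNs DIM('a) s * \<bar>u (fst p) - u (snd p)\<bar>\<^sup>2
               / norm (fst p - snd p) powr (real DIM('a) + 2 * s)) \<partial>(lebesgue \<Otimes>\<^sub>M lebesgue))"

end

theory Submission
  imports Defs "HOL-Real_Asymp.Real_Asymp"
begin

text \<open>
  For large |x| the kernel |x - y| powr -(N + 2s) is, uniformly in y \<in> \<Omega> and 0 < s < 1,
  within a factor 1 \<plusminus> \<eta> of |x| powr -(N + 2s). Hence N_s u(x) equals
  c_{N,s} |x| powr -(N + 2s) (|\<Omega>| u(x) - \<integral>_\<Omega> u) up to an error of at most
  c_{N,s} |x| powr -(N + 2s) 2 M \<eta> |\<Omega>|, where M bounds |u|. If |\<Omega>| u(x) - \<integral>_\<Omega> u exceeded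
  2 M \<eta> |\<Omega>| in absolute value, then, as c_{N,s} > 0, all N_s u(x) with 0 < s < 1 would share
  its strict sign and their \<mu>-integral could not vanish. So |u(x) - \<integral>_\<Omega> u / |\<Omega>|| \<le> 2 M \<eta>
  for all large |x|.
\<close>

lemma sigma_finite_measure_lebesgue: "sigma_finite_measure (lebesgue :: 'a::euclidean_space measure)"
proof
  obtain A :: "'a set set" where "countable A" "A \<subseteq> sets lborel" "\<Union>A = space lborel"
      "\<forall>a\<in>A. emeasure lborel a \<noteq> \<infinity>"
    using lborel.sigma_finite_countable by blast
  then show "\<exists>A::'a set set. countable A \<and> A \<subseteq> sets lebesgue \<and> \<Union>A = space lebesgue
      \<and> (\<forall>a\<in>A. emeasure lebesgue a \<noteq> \<infinity>)"
    by (intro exI[of _ A]) auto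
qed

lemma borel_measurable_ident_lebesgue [measurable]:
  "(\<lambda>x::'a::euclidean_space. x) \<in> borel_measurable lebesgue"
  using id_borel_measurable_lebesgue by (simp add: id_def)

lemma measure_lebesgue_pos_open:
  fixes \<Omega> :: "'a::euclidean_space set"
  assumes "open \<Omega>" "\<Omega> \<noteq> {}" "\<Omega> \<in> lmeasurable"
  shows "0 < measure lebesgue \<Omega>"
proof -
  obtain a e where "0 < e" "ball a e \<subseteq> \<Omega>"
    using assms(1,2) openE by blast
  then have "0 < measure lebesgue (ball a e)"
    by (simp add: content_ball_pos)
  also have "\<dots> \<le> measure lebesgue \<Omega>"
    using \<open>ball a e \<subseteq> \<Omega>\<close> assms(3) by (intro measure_mono_fmeasurable) auto
  finally show ?thesis .
qed

lemma set_integrable_bounded_lmeasurable: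
  fixes g :: "'a::euclidean_space \<Rightarrow> real"
  assumes "\<Omega> \<in> lmeasurable" "g \<in> borel_measurable lebesgue" "\<And>y. y \<in> \<Omega> \<Longrightarrow> \<bar>g y\<bar> \<le> B"
  shows "set_integrable lebesgue \<Omega> g"
proof (rule set_integrable_bound)
  show "set_integrable lebesgue \<Omega> (\<lambda>_. B)"
    using assms(1) by (simp add: set_integrable_def lmeasurable_iff_integrable)
  have [measurable]: "\<Omega> \<in> sets lebesgue"
    using assms(1) by (simp add: fmeasurable_def)
  show "set_borel_measurable lebesgue \<Omega> g"
    using assms(2) unfolding set_borel_measurable_def by measurable
  show "AE y in lebesgue. y \<in> \<Omega> \<longrightarrow> norm (g y) \<le> norm B"
    using assms(3) by force
qed

lemma set_integral_mult_approx_const: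
  fixes g k :: "'a::euclidean_space \<Rightarrow> real"
  assumes \<Omega>: "\<Omega> \<in> lmeasurable" and [measurable]: "g \<in> borel_measurable lebesgue" "k \<in> borel_measurable lebesgue"
    and g_le: "\<And>y. y \<in> \<Omega> \<Longrightarrow> \<bar>g y\<bar> \<le> M" and k_approx: "\<And>y. y \<in> \<Omega> \<Longrightarrow> \<bar>k y - c\<bar> \<le> \<epsilon>"
  shows "\<bar>(\<integral>y\<in>\<Omega>. g y * k y \<partial>lebesgue) - c * (\<integral>y\<in>\<Omega>. g y \<partial>lebesgue)\<bar>
           \<le> M * \<epsilon> * measure lebesgue \<Omega>"
proof -
  have bound: "\<bar>g y * (k y - c)\<bar> \<le> M * \<epsilon>" if "y \<in> \<Omega>" for y
    unfolding abs_mult using g_le[OF that] k_approx[OF that] by (intro mult_mono) auto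
  have int_g: "set_integrable lebesgue \<Omega> g"
    by (rule set_integrable_bounded_lmeasurable[OF \<Omega> _ g_le]) measurable
  have int_diff: "set_integrable lebesgue \<Omega> (\<lambda>y. g y * (k y - c))"
    by (rule set_integrable_bounded_lmeasurable[OF \<Omega> _ bound]) measurable
  have int_gk: "set_integrable lebesgue \<Omega> (\<lambda>y. g y * k y)"
  proof (rule set_integrable_bounded_lmeasurable[OF \<Omega>])
    fix y assume y: "y \<in> \<Omega>"
    have "\<bar>k y\<bar> \<le> \<bar>c\<bar> + \<epsilon>"
      using k_approx[OF y] by linarith
    then show "\<bar>g y * k y\<bar> \<le> M * (\<bar>c\<bar> + \<epsilon>)"
      using g_le[OF y] unfolding abs_mult by (intro mult_mono) auto
  qed measurable
  have "(\<integral>y\<in>\<Omega>. g y * k y \<partial>lebesgue) - c * (\<integral>y\<in>\<Omega>. g y \<partial>lebesgue)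
      = (\<integral>y\<in>\<Omega>. g y * k y - c * g y \<partial>lebesgue)"
    using int_gk int_g by (simp add: set_integral_diff)
  also have "\<dots> = (\<integral>y\<in>\<Omega>. g y * (k y - c) \<partial>lebesgue)"
    by (simp add: right_diff_distrib mult.commute)
  also have "\<bar>\<dots>\<bar> \<le> (\<integral>y\<in>\<Omega>. \<bar>g y * (k y - c)\<bar> \<partial>lebesgue)"
    using set_integral_norm_bound[OF int_diff] by simp
  also have "\<dots> \<le> (\<integral>y\<in>\<Omega>. M * \<epsilon> \<partial>lebesgue)"
  proof (rule set_integral_mono[OF set_integrable_abs[OF int_diff]])
    show "set_integrable lebesgue \<Omega> (\<lambda>_. M * \<epsilon>)"
      by (rule set_integrable_bounded_lmeasurable[OF \<Omega>, where B="\<bar>M * \<epsilon>\<bar>"]) auto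
  qed (rule bound)
  also have "\<dots> = M * \<epsilon> * measure lebesgue \<Omega>"
    using \<Omega> by (subst set_integral_const) (auto simp: fmeasurable_def)
  finally show ?thesis .
qed

lemma (in finite_measure) set_integral_pos:
  fixes f :: "'a \<Rightarrow> real"
  assumes "A \<in> sets M" "emeasure M A \<noteq> 0" "set_borel_measurable M A f"
    and pos: "\<And>s. s \<in> A \<Longrightarrow> 0 < f s" and bdd: "\<And>s. s \<in> A \<Longrightarrow> f s \<le> B"
  shows "0 < (\<integral>s\<in>A. f s \<partial>M)"
proof -
  have "integrable M (\<lambda>s. indicator A s * f s)"
  proof (rule integrable_const_bound[where B="max B 0"])
    show "AE s in M. norm (indicator A s * f s) \<le> max B 0"
      using pos bdd by (intro AE_I2) (force split: split_indicator)
  qed (use assms(3) in \<open>simp add: set_borel_measurable_def\<close>)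
  then have "integral\<^sup>L M (\<lambda>_. 0) < integral\<^sup>L M (\<lambda>s. indicator A s * f s)"
    using assms(1,2) pos by (intro integral_less_AE AE_I2) (auto split: split_indicator dest: pos)
  then show ?thesis
    by (simp add: set_lebesgue_integral_def)
qed

lemma eventually_inverse_powr_close:
  fixes R \<eta> q :: real
  assumes "0 \<le> R" "0 < \<eta>"
  shows "eventually (\<lambda>r. \<forall>\<rho> p. r - R \<le> \<rho> \<longrightarrow> \<rho> \<le> r + R \<longrightarrow> 0 \<le> p \<longrightarrow> p \<le> q \<longrightarrow>
           \<bar>1 / \<rho> powr p - 1 / r powr p\<bar> \<le> \<eta> / r powr p) at_top"
proof -
  have "((\<lambda>r. (r / (r - R)) powr q) \<longlongrightarrow> 1) at_top" "((\<lambda>r. (r / (r + R)) powr q) \<longlongrightarrow> 1) at_top"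
    by real_asymp+
  then have "eventually (\<lambda>r. (r / (r - R)) powr q < 1 + \<eta>) at_top"
      "eventually (\<lambda>r. 1 - \<eta> < (r / (r + R)) powr q) at_top"
    using assms(2) by (auto intro: order_tendstoD)
  moreover have "eventually (\<lambda>r. R < r) at_top"
    by (rule eventually_gt_at_top)
  ultimately show ?thesis
  proof eventually_elim
    case (elim r)
    show ?case
    proof (intro allI impI)
      fix \<rho> p :: real
      assume \<rho>: "r - R \<le> \<rho>" "\<rho> \<le> r + R" and p: "0 \<le> p" "p \<le> q"
      define t where "t = r / \<rho>"
      have pos: "0 < r" "0 < \<rho>" "0 < t"
        using elim \<rho> assms(1) by (auto simp: t_def)
      have "\<bar>t powr p - 1\<bar> \<le> \<eta>"
      proof (cases "t \<le> 1")
        case True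
        have "r / (r + R) \<le> t"
          unfolding t_def using pos \<rho> by (intro divide_left_mono) auto
        then have "(r / (r + R)) powr q \<le> t powr q"
          using pos p assms(1) by (intro powr_mono2) auto
        also have "\<dots> \<le> t powr p"
          using True pos p by (intro powr_mono') auto
        finally have "1 - \<eta> \<le> t powr p"
          using elim by linarith
        moreover have "t powr p \<le> 1"
          using True pos p by (simp add: powr_le1)
        ultimately show ?thesis
          by linarith
      next
        case False
        have "t \<le> r / (r - R)"
          unfolding t_def using pos \<rho> elim by (intro divide_left_mono) auto
        then have "t powr q \<le> (r / (r - R)) powr q"
          using pos p by (intro powr_mono2) auto
        moreover have "t powr p \<le> t powr q"
          using False p by (intro powr_mono) auto
        moreover have "1 \<le> t powr p"
          using False p by (simp add: ge_one_powr_ge_zero)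
        ultimately show ?thesis
          using elim by linarith
      qed
      moreover have "1 / \<rho> powr p - 1 / r powr p = (t powr p - 1) / r powr p"
        unfolding t_def using pos by (simp add: powr_divide field_simps)
      ultimately show "\<bar>1 / \<rho> powr p - 1 / r powr p\<bar> \<le> \<eta> / r powr p"
        using pos by (simp add: abs_divide divide_right_mono)
    qed
  qed
qed

lemma eventually_inverse_powr_dist_close:
  fixes R \<eta> q :: real
  assumes "0 < \<eta>"
  shows "eventually (\<lambda>x::'a::real_normed_vector. \<forall>y p. norm y \<le> R \<longrightarrow> 0 \<le> p \<longrightarrow> p \<le> q \<longrightarrow>
           \<bar>1 / norm (x - y) powr p - 1 / norm x powr p\<bar> \<le> \<eta> / norm x powr p) at_infinity"
proof -
  obtain B where B: "\<And>r \<rho> p. B \<le> r \<Longrightarrow> r - max R 0 \<le> \<rho> \<Longrightarrow> \<rho> \<le> r + max R 0 \<Longrightarrow> 0 \<le> p \<Longrightarrow> p \<le> q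
      \<Longrightarrow> \<bar>1 / \<rho> powr p - 1 / r powr p\<bar> \<le> \<eta> / r powr p"
    using eventually_inverse_powr_close[of "max R 0" \<eta> q] assms
    unfolding eventually_at_top_linorder by auto
  show ?thesis
    unfolding eventually_at_infinity
  proof (intro exI allI impI)
    fix x y :: 'a and p :: real
    assume "B \<le> norm x" "norm y \<le> R" "0 \<le> p" "p \<le> q"
    moreover have "norm x - norm y \<le> norm (x - y)" "norm (x - y) \<le> norm x + norm y"
      using norm_triangle_ineq2[of x y] norm_triangle_ineq4[of x y] by auto
    ultimately show "\<bar>1 / norm (x - y) powr p - 1 / norm x powr p\<bar> \<le> \<eta> / norm x powr p"
      by (intro B) auto
  qed
qed

lemma cNs_eq_rGamma:
  "cNs n s = - (2 powr (2 * s - 1) * Gamma ((real n + 2 * s) / 2) * rGamma (- s))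
               / pi powr (real n / 2)"
proof -
  have "\<And>X P G::real. - X / (P * G) = - (X * inverse G) / P"
    by (simp add: divide_inverse mult.assoc mult.commute)
  then show ?thesis
    unfolding cNs_def rGamma_inverse_Gamma by simp
qed

lemma cNs_pos:
  assumes "0 < s" "s < 1"
  shows "0 < cNs n s"
proof -
  have "- s \<notin> \<int>\<^sub>\<le>\<^sub>0"
  proof
    assume "- s \<in> \<int>\<^sub>\<le>\<^sub>0"
    then obtain k :: int where "- s = of_int k" "k \<le> 0"
      by (auto elim!: nonpos_Ints_cases)
    moreover have "k = 0 \<or> k \<le> -1"
      using \<open>k \<le> 0\<close> by arith
    then have "real_of_int k = 0 \<or> real_of_int k \<le> -1"
      by auto
    ultimately show False
      using assms by linarith
  qed
  then have "Gamma (- s + 1) = - s * Gamma (- s)"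
    by (rule Gamma_plus1)
  then have "Gamma (- s) = Gamma (- s + 1) / (- s)"
    using assms by (simp add: field_simps)
  moreover have "0 < Gamma (- s + 1)"
    using assms by (intro Gamma_real_pos) linarith
  ultimately have "Gamma (- s) < 0"
    using assms by (simp add: divide_pos_neg)
  moreover have "0 < Gamma ((real n + 2 * s) / 2)"
    using assms by (intro Gamma_real_pos) simp
  ultimately have "0 < - (2 powr (2 * s - 1) * Gamma ((real n + 2 * s) / 2)
      / (pi powr (real n / 2) * Gamma (- s)))"
    by (simp add: divide_pos_neg mult_pos_neg)
  then show ?thesis
    unfolding cNs_def by (simp only: minus_divide_left[symmetric])
qed

lemma continuous_on_cNs:
  assumes "0 < n"
  shows "continuous_on {0..1} (cNs n)"
  unfolding cNs_eq_rGamma[abs_def]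
proof (intro continuous_at_imp_continuous_on ballI)
  fix s :: real
  assume "s \<in> {0..1}"
  then have "(real n + 2 * s) / 2 > 0"
    using assms by auto
  then have "(real n + 2 * s) / 2 \<notin> \<int>\<^sub>\<le>\<^sub>0"
    by (auto elim!: nonpos_Ints_cases)
  then show "isCont (\<lambda>s. - (2 powr (2 * s - 1) * Gamma ((real n + 2 * s) / 2) * rGamma (- s))
      / pi powr (real n / 2)) s"
    by (intro continuous_intros) auto
qed

lemma bounded_cNs:
  assumes "0 < n"
  shows "bounded (cNs n ` {0<..<1})"
proof -
  have "bounded (cNs n ` {0..1})"
    by (intro compact_imp_bounded compact_continuous_image continuous_on_cNs assms compact_Icc)
  then show ?thesis
    by (rule bounded_subset) (intro image_mono, auto)
qed

lemma set_borel_measurable_cNs: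
  assumes "0 < n"
  shows "set_borel_measurable borel {0<..<1} (cNs n)"
  unfolding set_borel_measurable_def
proof (rule borel_measurable_continuous_on_indicator)
  show "continuous_on {0<..<1} (cNs n)"
    by (rule continuous_on_subset[OF continuous_on_cNs[OF assms]]) auto
qed simp

lemma set_borel_measurable_neumann_s:
  assumes [measurable]: "\<Omega> \<in> sets lebesgue" "u \<in> borel_measurable lebesgue"
  shows "set_borel_measurable borel {0<..<1} (\<lambda>s. neumann_s \<Omega> u s x)"
proof -
  interpret sigma_finite_measure "lebesgue :: 'a measure"
    by (rule sigma_finite_measure_lebesgue)
  have "(\<lambda>s. \<integral>y\<in>\<Omega>. (u x - u y) / norm (x - y) powr (real DIM('a) + 2 * s) \<partial>lebesgue)
          \<in> borel_measurable borel"
    unfolding set_lebesgue_integral_def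
    by (rule borel_measurable_lebesgue_integral) measurable
  moreover have "(\<lambda>s. indicator {0<..<1} s * cNs DIM('a) s) \<in> borel_measurable borel"
    using set_borel_measurable_cNs[OF DIM_positive] by (simp add: set_borel_measurable_def)
  ultimately show ?thesis
    unfolding set_borel_measurable_def neumann_s_def by (simp add: mult.assoc[symmetric])
qed

lemma neumann_s_approx:
  fixes \<Omega> :: "'a::euclidean_space set" and u :: "'a \<Rightarrow> real" and s :: real
  defines "p \<equiv> real DIM('a) + 2 * s"
  assumes \<Omega>: "\<Omega> \<in> lmeasurable" and [measurable]: "u \<in> borel_measurable lebesgue"
    and u_le: "\<And>y. \<bar>u y\<bar> \<le> M"
    and kernel: "\<And>y. y \<in> \<Omega> \<Longrightarrow> \<bar>1 / norm (x - y) powr p - 1 / norm x powr p\<bar> \<le> \<eta> / norm x powr p"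
  shows "\<bar>neumann_s \<Omega> u s x
            - cNs DIM('a) s * (u x * measure lebesgue \<Omega> - (\<integral>y\<in>\<Omega>. u y \<partial>lebesgue)) / norm x powr p\<bar>
         \<le> \<bar>cNs DIM('a) s\<bar> * (2 * M * \<eta> * measure lebesgue \<Omega> / norm x powr p)"
proof -
  define V where "V = measure lebesgue \<Omega>"
  define D where "D = u x * V - (\<integral>y\<in>\<Omega>. u y \<partial>lebesgue)"
  define I where "I = (\<integral>y\<in>\<Omega>. (u x - u y) * (1 / norm (x - y) powr p) \<partial>lebesgue)"
  have int_u: "set_integrable lebesgue \<Omega> u"
    by (rule set_integrable_bounded_lmeasurable[OF \<Omega> _ u_le]) measurable
  have int_const: "set_integrable lebesgue \<Omega> (\<lambda>_. u x)"
    by (rule set_integrable_bounded_lmeasurable[OF \<Omega>, where B="\<bar>u x\<bar>"]) auto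
  have "(\<integral>y\<in>\<Omega>. u x - u y \<partial>lebesgue) = (\<integral>y\<in>\<Omega>. u x \<partial>lebesgue) - (\<integral>y\<in>\<Omega>. u y \<partial>lebesgue)"
    by (rule set_integral_diff(2)[OF int_const int_u])
  also have "(\<integral>y\<in>\<Omega>. u x \<partial>lebesgue) = V * u x"
    using \<Omega> unfolding V_def by (subst set_integral_const) (auto simp: fmeasurable_def)
  finally have mean: "(\<integral>y\<in>\<Omega>. u x - u y \<partial>lebesgue) = D"
    unfolding D_def by (simp only: mult.commute)
  have "\<bar>u x - u y\<bar> \<le> 2 * M" for y
    using u_le[of x] u_le[of y] by linarith
  then have "\<bar>I - 1 / norm x powr p * (\<integral>y\<in>\<Omega>. u x - u y \<partial>lebesgue)\<bar> \<le> 2 * M * (\<eta> / norm x powr p) * V"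
    unfolding I_def V_def by (intro set_integral_mult_approx_const[OF \<Omega> _ _ _ kernel]) measurable
  then have approx: "\<bar>I - D / norm x powr p\<bar> \<le> 2 * M * \<eta> * V / norm x powr p"
    unfolding mean by simp
  have "neumann_s \<Omega> u s x = cNs DIM('a) s * I"
    unfolding neumann_s_def I_def p_def by simp
  then have "\<bar>neumann_s \<Omega> u s x - cNs DIM('a) s * D / norm x powr p\<bar>
      = \<bar>cNs DIM('a) s\<bar> * \<bar>I - D / norm x powr p\<bar>"
    by (simp only: abs_mult[symmetric] right_diff_distrib times_divide_eq_right)
  also have "\<dots> \<le> \<bar>cNs DIM('a) s\<bar> * (2 * M * \<eta> * V / norm x powr p)"
    by (rule mult_left_mono[OF approx]) simp
  finally show ?thesis
    unfolding D_def V_def .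
qed

lemma neumann_s_sign:
  fixes \<Omega> :: "'a::euclidean_space set" and u :: "'a \<Rightarrow> real" and x :: 'a and s :: real
  defines "p \<equiv> real DIM('a) + 2 * s"
    and "D \<equiv> u x * measure lebesgue \<Omega> - (\<integral>y\<in>\<Omega>. u y \<partial>lebesgue)"
  assumes \<Omega>: "\<Omega> \<in> lmeasurable" and u_meas: "u \<in> borel_measurable lebesgue"
    and u_le: "\<And>y. \<bar>u y\<bar> \<le> M" and "x \<noteq> 0" and "0 < s" "s < 1" and "0 \<le> \<eta>"
    and kernel: "\<And>y. y \<in> \<Omega> \<Longrightarrow> \<bar>1 / norm (x - y) powr p - 1 / norm x powr p\<bar> \<le> \<eta> / norm x powr p"
    and D_gt: "2 * M * \<eta> * measure lebesgue \<Omega> < \<bar>D\<bar>"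
  shows "0 < sgn D * neumann_s \<Omega> u s x"
proof -
  define c where "c = cNs DIM('a) s"
  define E where "E = 2 * M * \<eta> * measure lebesgue \<Omega>"
  define w where "w = norm x powr p"
  have "0 < c" "0 < w"
    using cNs_pos[OF \<open>0 < s\<close> \<open>s < 1\<close>] \<open>x \<noteq> 0\<close> by (simp_all add: c_def w_def)
  have "0 \<le> E"
    unfolding E_def using u_le[of x] \<open>0 \<le> \<eta>\<close> by simp
  then have "D \<noteq> 0"
    using D_gt unfolding E_def by auto
  have "c * (E / w) < c * (\<bar>D\<bar> / w)"
    using \<open>0 < c\<close> \<open>0 < w\<close> D_gt unfolding E_def by (intro mult_strict_left_mono divide_strict_right_mono) auto
  also have "\<dots> = sgn D * (c * D / w)"
    by (simp add: abs_sgn mult_ac)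
  finally have less: "c * (E / w) < sgn D * (c * D / w)" .
  have "\<bar>sgn D * neumann_s \<Omega> u s x - sgn D * (c * D / w)\<bar> = \<bar>neumann_s \<Omega> u s x - c * D / w\<bar>"
    using \<open>D \<noteq> 0\<close> by (simp add: abs_mult[symmetric] right_diff_distrib[symmetric] sgn_if abs_minus_commute del: abs_mult)
  also have "\<dots> \<le> c * (E / w)"
    using neumann_s_approx[OF \<Omega> u_meas u_le kernel[unfolded p_def]] \<open>0 < c\<close>
    unfolding c_def E_def w_def D_def p_def by simp
  finally show ?thesis
    using less by (simp only: abs_le_iff) linarith
qed

lemma abs_neumann_s_le:
  fixes \<Omega> :: "'a::euclidean_space set" and u :: "'a \<Rightarrow> real" and x :: 'a and s :: real
  defines "p \<equiv> real DIM('a) + 2 * s"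
    and "D \<equiv> u x * measure lebesgue \<Omega> - (\<integral>y\<in>\<Omega>. u y \<partial>lebesgue)"
  assumes \<Omega>: "\<Omega> \<in> lmeasurable" and u_meas: "u \<in> borel_measurable lebesgue"
    and u_le: "\<And>y. \<bar>u y\<bar> \<le> M" and "1 \<le> norm x" "0 \<le> s" "0 \<le> \<eta>"
    and kernel: "\<And>y. y \<in> \<Omega> \<Longrightarrow> \<bar>1 / norm (x - y) powr p - 1 / norm x powr p\<bar> \<le> \<eta> / norm x powr p"
  shows "\<bar>neumann_s \<Omega> u s x\<bar> \<le> \<bar>cNs DIM('a) s\<bar> * (\<bar>D\<bar> + 2 * M * \<eta> * measure lebesgue \<Omega>)"
proof -
  define c where "c = \<bar>cNs DIM('a) s\<bar>"
  define E where "E = 2 * M * \<eta> * measure lebesgue \<Omega>"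
  define w where "w = norm x powr p"
  have "1 \<le> w"
    unfolding w_def p_def using \<open>1 \<le> norm x\<close> \<open>0 \<le> s\<close> by (intro ge_one_powr_ge_zero) auto
  have "0 \<le> E"
    unfolding E_def using u_le[of x] \<open>0 \<le> \<eta>\<close> by simp
  have "\<bar>neumann_s \<Omega> u s x\<bar> \<le> \<bar>neumann_s \<Omega> u s x - cNs DIM('a) s * D / w\<bar> + \<bar>cNs DIM('a) s * D / w\<bar>"
    using abs_triangle_ineq[of "neumann_s \<Omega> u s x - cNs DIM('a) s * D / w" "cNs DIM('a) s * D / w"] by simp
  also have "\<dots> \<le> c * (E / w) + c * (\<bar>D\<bar> / w)"
    using neumann_s_approx[OF \<Omega> u_meas u_le kernel[unfolded p_def]]
    unfolding c_def E_def w_def D_def p_def by (simp add: abs_mult)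
  also have "\<dots> \<le> c * (E / 1) + c * (\<bar>D\<bar> / 1)"
    using \<open>1 \<le> w\<close> \<open>0 \<le> E\<close> unfolding c_def by (intro add_mono mult_left_mono frac_le) auto
  finally show ?thesis
    unfolding c_def E_def by (simp add: algebra_simps)
qed

lemma mean_deviation_le_of_neumann_integral_zero:
  fixes \<Omega> :: "'a::euclidean_space set" and u :: "'a \<Rightarrow> real" and \<mu> :: "real measure"
  assumes mu_borel: "sets \<mu> = sets borel" and "finite_measure \<mu>"
    and mu_nontriv: "emeasure \<mu> {0<..<1} \<noteq> 0"
    and \<Omega>: "\<Omega> \<in> lmeasurable" and u_meas: "u \<in> borel_measurable lebesgue"
    and u_le: "\<And>y. \<bar>u y\<bar> \<le> M" and x: "1 \<le> norm x" and "0 \<le> \<eta>"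
    and kernel: "\<And>y s. y \<in> \<Omega> \<Longrightarrow> 0 < s \<Longrightarrow> s < 1 \<Longrightarrow>
       \<bar>1 / norm (x - y) powr (real DIM('a) + 2 * s) - 1 / norm x powr (real DIM('a) + 2 * s)\<bar>
         \<le> \<eta> / norm x powr (real DIM('a) + 2 * s)"
    and neumann: "(\<integral>s\<in>{0<..<1}. neumann_s \<Omega> u s x \<partial>\<mu>) = 0"
  shows "\<bar>u x * measure lebesgue \<Omega> - (\<integral>y\<in>\<Omega>. u y \<partial>lebesgue)\<bar> \<le> 2 * M * \<eta> * measure lebesgue \<Omega>"
proof (rule ccontr)
  interpret finite_measure \<mu> by fact
  define D where "D = u x * measure lebesgue \<Omega> - (\<integral>y\<in>\<Omega>. u y \<partial>lebesgue)"
  define E where "E = 2 * M * \<eta> * measure lebesgue \<Omega>"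
  assume "\<not> \<bar>D\<bar> \<le> E"
  have "0 \<le> E"
    unfolding E_def using u_le[of x] \<open>0 \<le> \<eta>\<close> by simp
  obtain C where C: "\<And>s. s \<in> {0<..<1} \<Longrightarrow> \<bar>cNs DIM('a) s\<bar> \<le> C"
    using bounded_cNs[OF DIM_positive] unfolding bounded_iff real_norm_def by blast
  have "set_borel_measurable borel {0<..<1} (\<lambda>s. neumann_s \<Omega> u s x)"
    using \<Omega> u_meas by (intro set_borel_measurable_neumann_s) (auto simp: fmeasurable_def)
  then have "(\<lambda>s. sgn D * (indicator {0<..<1} s *\<^sub>R neumann_s \<Omega> u s x)) \<in> borel_measurable borel"
    unfolding set_borel_measurable_def by (rule borel_measurable_times[OF borel_measurable_const])
  then have meas: "set_borel_measurable \<mu> {0<..<1} (\<lambda>s. sgn D * neumann_s \<Omega> u s x)"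
    unfolding set_borel_measurable_def measurable_cong_sets[OF mu_borel refl] by (simp add: mult.left_commute)
  have "0 < (\<integral>s\<in>{0<..<1}. sgn D * neumann_s \<Omega> u s x \<partial>\<mu>)"
  proof (rule set_integral_pos[OF _ mu_nontriv meas])
    fix s :: real assume s: "s \<in> {0<..<1}"
    show "0 < sgn D * neumann_s \<Omega> u s x"
      using s x \<open>0 \<le> \<eta>\<close> \<open>\<not> \<bar>D\<bar> \<le> E\<close> unfolding D_def E_def
      by (intro neumann_s_sign[OF \<Omega> u_meas u_le, where \<eta>=\<eta>] kernel) auto
    have "sgn D * neumann_s \<Omega> u s x \<le> \<bar>neumann_s \<Omega> u s x\<bar>"
      by (auto simp: sgn_if)
    also have "\<dots> \<le> \<bar>cNs DIM('a) s\<bar> * (\<bar>D\<bar> + E)"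
      using s x \<open>0 \<le> \<eta>\<close> unfolding D_def E_def
      by (intro abs_neumann_s_le[OF \<Omega> u_meas u_le, where \<eta>=\<eta>] kernel) auto
    also have "\<dots> \<le> C * (\<bar>D\<bar> + E)"
      using C[OF s] \<open>0 \<le> E\<close> by (intro mult_right_mono) auto
    finally show "sgn D * neumann_s \<Omega> u s x \<le> C * (\<bar>D\<bar> + E)" .
  qed (use mu_borel in simp)
  then show False
    using neumann by simp
qed

lemma eventually_mean_deviation_le:
  fixes \<Omega> :: "'a::euclidean_space set" and u :: "'a \<Rightarrow> real" and \<mu> :: "real measure"
  assumes mu_borel: "sets \<mu> = sets borel" and mu_finite: "finite_measure \<mu>"
    and mu_nontriv: "emeasure \<mu> {0<..<1} \<noteq> 0"
    and \<Omega>: "\<Omega> \<in> lmeasurable" and "bounded \<Omega>" and u_meas: "u \<in> borel_measurable lebesgue"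
    and u_le: "\<And>y. \<bar>u y\<bar> \<le> M" and "0 < \<eta>"
    and neumann: "\<And>x. x \<notin> closure \<Omega> \<Longrightarrow> (\<integral>s\<in>{0<..<1}. neumann_s \<Omega> u s x \<partial>\<mu>) = 0"
  shows "eventually (\<lambda>x. \<bar>u x * measure lebesgue \<Omega> - (\<integral>y\<in>\<Omega>. u y \<partial>lebesgue)\<bar>
           \<le> 2 * M * \<eta> * measure lebesgue \<Omega>) at_infinity"
proof -
  obtain R where R: "\<And>y. y \<in> \<Omega> \<Longrightarrow> norm y \<le> R"
    using \<open>bounded \<Omega>\<close> unfolding bounded_iff by auto
  have "closure \<Omega> \<subseteq> cball 0 R"
    using R by (intro closure_minimal) auto
  have "eventually (\<lambda>x. max R 1 < norm x) at_infinity"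
    by (meson eventually_at_infinity gt_ex order.strict_trans2)
  moreover note eventually_inverse_powr_dist_close[OF \<open>0 < \<eta>\<close>, of R "real DIM('a) + 2"]
  ultimately show ?thesis
  proof eventually_elim
    case (elim x)
    then have "x \<notin> closure \<Omega>"
      using \<open>closure \<Omega> \<subseteq> cball 0 R\<close> by auto
    moreover have "\<bar>1 / norm (x - y) powr (real DIM('a) + 2 * s) - 1 / norm x powr (real DIM('a) + 2 * s)\<bar>
        \<le> \<eta> / norm x powr (real DIM('a) + 2 * s)" if "y \<in> \<Omega>" "0 < s" "s < 1" for y s
      using that by (intro elim(2)[rule_format] R) auto
    ultimately show ?case
      using \<open>0 < \<eta>\<close> elim(1)
      by (intro mean_deviation_le_of_neumann_integral_zero[OF mu_borel mu_finite mu_nontriv \<Omega> u_meas u_le]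
          neumann) auto
  qed
qed

theorem theorem1p3:
  fixes \<Omega> :: "'a::euclidean_space set"
    and u :: "'a \<Rightarrow> real"
    and \<mu> :: "real measure"
  assumes mu_borel: "sets \<mu> = sets borel"
    and mu_finite: "finite_measure \<mu>"
    and mu_supp: "emeasure \<mu> (- {0<..<1}) = 0"
    and mu_nontriv: "emeasure \<mu> {0<..<1} \<noteq> 0"
    and \<Omega>_open: "open \<Omega>" and \<Omega>_bdd: "bounded \<Omega>" and \<Omega>_ne: "\<Omega> \<noteq> {}"
    and u_meas: "u \<in> borel_measurable lebesgue"
    and u_bdd: "bounded (range u)"
    and energy: "(\<integral>\<^sup>+ s\<in>{0<..<1}. gagliardo_sq \<Omega> u s \<partial>\<mu>) < \<infinity>"
    and neumann: "\<And>x. x \<notin> closure \<Omega> \<Longrightarrow>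
                    (\<integral>s\<in>{0<..<1}. neumann_s \<Omega> u s x \<partial>\<mu>) = 0"
  shows "(u \<longlongrightarrow> (1 / measure lebesgue \<Omega>) * (\<integral>x\<in>\<Omega>. u x \<partial>lebesgue)) at_infinity"
proof (rule tendstoI)
  fix e :: real assume "0 < e"
  define V where "V = measure lebesgue \<Omega>"
  define S where "S = (\<integral>y\<in>\<Omega>. u y \<partial>lebesgue)"
  have \<Omega>: "\<Omega> \<in> lmeasurable"
    using \<Omega>_bdd \<Omega>_open by (rule lmeasurable_open)
  have "0 < V"
    unfolding V_def using \<Omega>_open \<Omega>_ne \<Omega> by (rule measure_lebesgue_pos_open)
  obtain M where M: "\<And>y. \<bar>u y\<bar> \<le> M"
    using u_bdd unfolding bounded_iff by auto
  define \<eta> where "\<eta> = e / (2 * M + 1)"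
  have "0 \<le> M"
    using M[of undefined] by linarith
  then have "0 < \<eta>" and "2 * M * \<eta> < e"
    using \<open>0 < e\<close> by (auto simp: \<eta>_def field_simps)
  with eventually_mean_deviation_le[OF mu_borel mu_finite mu_nontriv \<Omega> \<Omega>_bdd u_meas M _ neumann]
  have "eventually (\<lambda>x. \<bar>u x * V - S\<bar> \<le> 2 * M * \<eta> * V) at_infinity"
    unfolding V_def S_def by blast
  then show "eventually (\<lambda>x. dist (u x) (1 / measure lebesgue \<Omega> * (\<integral>x\<in>\<Omega>. u x \<partial>lebesgue)) < e) at_infinity"
  proof eventually_elim
    case (elim x)
    then have "dist (u x) (1 / V * S) \<le> 2 * M * \<eta>"
      using \<open>0 < V\<close> by (simp add: dist_real_def field_simps abs_le_iff)
    then show ?case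
      unfolding V_def S_def using \<open>2 * M * \<eta> < e\<close> by simp
  qed
qed

end
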